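(* Let $E_1, E_2, \ldots$ be i.i.d.\ exponential random variables with mean $1$, and $Z_k = E_1 + \cdots + E_k$. Let $\Psi(x) = 2^{\{\log_2 x\}}$ for $x > 0$. Let $r \geq 0$ be an integer and $\gamma > 0$. Then the series \[ Y_{r,\gamma} = \sum_{k=r+1}^\infty \left( \frac{\Psi(Z_k/\gamma)}{Z_k} - \frac{\Psi(k/\gamma)}{k}\right) \] converges absolutely with probability $1$, and its sum belongs to $L_p$ for every $1 \leq p < r+1$.
   Context: $\{y\}$ denotes the fractional part of $y$, so $\Psi$ increases linearly from $1$ to $2$ on each interval $[2^j, 2^{j+1})$, $j \in \mathbb{Z}$. *)

theory Defs
  imports "HOL-Probability.Probability"
begin

definition Psi :: "real \<Rightarrow> real" where
  "Psi x = 2 powr frac (log 2 x)"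

end

theory Submission
  imports Defs
begin

text \<open>Write \<open>D k = \<bar>Psi (Z k/\<gamma>)/Z k - Psi (k/\<gamma>)/k\<bar>\<close>. As \<open>Psi (x/\<gamma>)/x = 2 powr -\<lfloor>log 2 (x/\<gamma>)\<rfloor> / \<gamma>\<close>
  is piecewise constant, \<open>D k \<le> 2 / min (Z k) k\<close>, and \<open>D k = 0\<close> unless a point \<open>b = \<gamma> 2^j\<close> lies
  between \<open>Z k\<close> and \<open>k\<close>. On \<open>Z k < k/2\<close> the Erlang density of \<open>Z k\<close> makes the contribution to
  \<open>E (D k)^p\<close> finite for \<open>k > p\<close> and geometrically small in \<open>k\<close>. On \<open>Z k \<ge> k/2\<close> such a point has
  \<open>b > k/2\<close> and forces \<open>(Z k - k)^2 \<ge> (k - b)^2\<close>; Chebyshev's inequality with \<open>Var (Z k) = k\<close>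
  bounds that contribution by \<open>k^(1-p) \<Sum>\<^sub>b 1/((k - b)^2 + k)\<close>, and summing against \<open>k^(p-1+\<epsilon>)\<close>
  leaves \<open>\<Sum>\<^sub>b b^(-1/4) < \<infinity>\<close>. Finally Jensen's inequality with the summable weights
  \<open>k^(-1-\<epsilon>/(p-1))\<close> turns \<open>\<Sum>\<^sub>k k^(p-1+\<epsilon>) E (D k)^p < \<infinity>\<close> into \<open>E (\<Sum>\<^sub>k D k)^p < \<infinity>\<close>.\<close>

lemma Psi_nonneg: "0 \<le> Psi x"
  unfolding Psi_def by simp

lemma Psi_le_2: "Psi x \<le> 2"
proof -
  have "2 powr frac (log 2 x) \<le> 2 powr 1"
    using frac_lt_1 by (intro powr_mono) (auto intro: less_imp_le)
  thus ?thesis unfolding Psi_def by simp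
qed

lemma Psi_div_self:
  assumes "x > 0"
  shows "Psi x / x = 2 powr (- of_int \<lfloor>log 2 x\<rfloor>)"
proof -
  have "Psi x / x = 2 powr frac (log 2 x) / 2 powr (log 2 x)"
    using assms unfolding Psi_def by simp
  also have "\<dots> = 2 powr (- of_int \<lfloor>log 2 x\<rfloor>)"
    by (simp add: powr_diff[symmetric] frac_def)
  finally show ?thesis .
qed

lemma powr_between_if_floor_log_neq:
  fixes x y :: real
  assumes "0 < x" "x < y" "\<lfloor>log 2 x\<rfloor> \<noteq> \<lfloor>log 2 y\<rfloor>"
  shows "\<exists>j::int. x < 2 powr j \<and> 2 powr j \<le> y"
proof (intro exI conjI)
  have "\<lfloor>log 2 x\<rfloor> \<le> \<lfloor>log 2 y\<rfloor>"
    using assms by (intro floor_mono) simp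
  hence "log 2 x < of_int \<lfloor>log 2 y\<rfloor>"
    using assms(3) floor_less_iff by fastforce
  hence "2 powr (log 2 x) < 2 powr (of_int \<lfloor>log 2 y\<rfloor>)" by simp
  thus "x < 2 powr (of_int \<lfloor>log 2 y\<rfloor>)" using assms by simp
  have "2 powr (of_int \<lfloor>log 2 y\<rfloor>) \<le> 2 powr (log 2 y)" by (intro powr_mono) auto
  thus "2 powr (of_int \<lfloor>log 2 y\<rfloor>) \<le> y" using assms by simp
qed

lemma Psi_ratio_diff_le:
  fixes z y \<gamma> :: real
  assumes "z > 0" "y > 0" "\<gamma> > 0"
  shows "\<bar>Psi (z / \<gamma>) / z - Psi (y / \<gamma>) / y\<bar> \<le> 2 / min z y"
proof -
  have bound: "0 \<le> Psi (x / \<gamma>) / x \<and> Psi (x / \<gamma>) / x \<le> 2 / min z y" if "x \<in> {z, y}" for x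
  proof -
    have "Psi (x / \<gamma>) / x \<le> 2 / x"
      using that assms Psi_le_2 by (auto intro: divide_right_mono)
    also have "\<dots> \<le> 2 / min z y"
      using that assms by (auto intro: divide_left_mono)
    finally show ?thesis using that assms Psi_nonneg by auto
  qed
  show ?thesis
    using bound[of z] bound[of y] unfolding abs_le_iff by auto
qed

lemma dyadic_between_if_Psi_ratio_neq:
  fixes z y \<gamma> :: real
  assumes "z > 0" "y > 0" "\<gamma> > 0" and neq: "Psi (z / \<gamma>) / z \<noteq> Psi (y / \<gamma>) / y"
  shows "\<exists>j::int. min z y < \<gamma> * 2 powr j \<and> \<gamma> * 2 powr j \<le> max z y"
proof -
  have ratio: "Psi (x / \<gamma>) / x = 2 powr (- of_int \<lfloor>log 2 (x / \<gamma>)\<rfloor>) / \<gamma>" if "x > 0" for x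
    using Psi_div_self[of "x / \<gamma>"] that assms(3) by (simp add: field_simps)
  have floor_neq: "\<lfloor>log 2 (min z y / \<gamma>)\<rfloor> \<noteq> \<lfloor>log 2 (max z y / \<gamma>)\<rfloor>"
    using neq ratio[of z] ratio[of y] assms by (auto simp: min_def max_def)
  have "z \<noteq> y" using neq by auto
  hence "min z y / \<gamma> < max z y / \<gamma>"
    using assms(3) by (auto simp: min_def max_def divide_strict_right_mono)
  then obtain j :: int where "min z y / \<gamma> < 2 powr j" "2 powr j \<le> max z y / \<gamma>"
    using powr_between_if_floor_log_neq[OF _ _ floor_neq] assms by fastforce
  thus ?thesis using assms(3) by (intro exI[of _ j]) (simp add: field_simps)
qed

lemma sum_inverse_square_shift_le:
  fixes s y :: real
  assumes "0 < s" "s \<le> y"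
  shows "(\<Sum>t<n. 1 / (y + real t)^2) \<le> 1/s^2 + 1/s"
proof -
  have y: "y > 0" using assms by simp
  have telescope: "(\<Sum>t<Suc m. 1 / (y + real t)^2) \<le> 1/y^2 + 1/y - 1/(y + real m)" for m
  proof (induction m)
    case 0 then show ?case by simp
  next
    case (Suc m)
    have ym: "y + real m > 0" using y by simp
    have "1 / (y + real (Suc m))^2 \<le> 1 / ((y + real m) * (y + real (Suc m)))"
      using ym by (intro divide_left_mono) (auto simp: power2_eq_square intro!: mult_right_mono)
    also have "\<dots> = 1/(y + real m) - 1/(y + real (Suc m))"
      using ym by (simp add: field_simps)
    finally show ?case using Suc by simp
  qed
  have "(\<Sum>t<n. 1 / (y + real t)^2) \<le> 1/y^2 + 1/y"
  proof (cases n)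
    case (Suc m)
    have "1/(y + real m) > 0" using y by simp
    with telescope[of m] show ?thesis unfolding Suc by linarith
  qed (use y in simp)
  also have "\<dots> \<le> 1/s^2 + 1/s"
    using assms by (intro add_mono divide_left_mono power_mono) auto
  finally show ?thesis .
qed

lemma inverse_add_squares_le:
  fixes x s :: real
  assumes "s > 0"
  shows "1 / (x^2 + s^2) \<le> 2 / (\<bar>x\<bar> + s)^2"
proof -
  have "(\<bar>x\<bar> + s)^2 \<le> 2 * (x^2 + s^2)"
    using sum_squares_ge_zero[of "\<bar>x\<bar> - s" 0] by (simp add: power2_eq_square algebra_simps)
  moreover have "(\<bar>x\<bar> + s)^2 > 0" using assms by simp
  ultimately show ?thesis
    using assms by (simp add: field_simps add_pos_nonneg)
qed

text \<open>Comparing with \<open>\<Sum> 1/(y + t)\<^sup>2\<close> on either side of \<open>b\<close>.\<close>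

lemma sum_inverse_square_dist_le:
  fixes b c :: real
  assumes c: "c > 0"
  shows "(\<Sum>k<N. 1 / ((real k - b)^2 + c)) \<le> 4 * (1/c + 1/sqrt c)"
proof -
  define s where "s = sqrt c"
  have s: "s > 0" "s^2 = c" using c by (auto simp: s_def)
  define f where "f k = 1 / ((real k - b)^2 + c)" for k
  have f0: "f k \<ge> 0" for k unfolding f_def using c by simp
  have shifted: "(\<Sum>t<n. f (g t)) \<le> 2 * (1/c + 1/s)"
    if g: "\<And>t. t < n \<Longrightarrow> \<bar>real (g t) - b\<bar> + s = y + real t" and y: "s \<le> y"
    for g :: "nat \<Rightarrow> nat" and y n
  proof -
    have "(\<Sum>t<n. f (g t)) \<le> (\<Sum>t<n. 2 * (1 / (y + real t)^2))"
    proof (rule sum_mono)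
      fix t assume "t \<in> {..<n}"
      thus "f (g t) \<le> 2 * (1 / (y + real t)^2)"
        using inverse_add_squares_le[OF s(1), of "real (g t) - b"] g s unfolding f_def by simp
    qed
    also have "\<dots> = 2 * (\<Sum>t<n. 1 / (y + real t)^2)"
      by (rule sum_distrib_left[symmetric])
    also have "\<dots> \<le> 2 * (1/c + 1/s)"
      using sum_inverse_square_shift_le[OF s(1) y, of n] s by simp
    finally show ?thesis .
  qed
  define m where "m = nat \<lceil>b\<rceil>"
  have "(\<Sum>k<N. f k) \<le> (\<Sum>k<m + N. f k)"
    by (rule sum_mono2) (auto simp: f0)
  also have "\<dots> = (\<Sum>k<m. f k) + (\<Sum>k=m..<m+N. f k)"
    by (simp add: atLeast0LessThan[symmetric] sum.atLeastLessThan_concat)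
  also have "(\<Sum>k<m. f k) = (\<Sum>t<m. f (m - Suc t))"
    by (rule sum.nat_diff_reindex[symmetric])
  also have "(\<Sum>k=m..<m+N. f k) = (\<Sum>t<N. f (m + t))"
    using sum.shift_bounds_nat_ivl[of f 0 m N] by (simp add: add.commute atLeast0LessThan)
  also have "(\<Sum>t<m. f (m - Suc t)) \<le> 2 * (1/c + 1/s)"
  proof (cases "m = 0")
    case False
    hence "real m < b + 1" unfolding m_def by linarith
    thus ?thesis
      by (intro shifted[where y = "b - real m + 1 + s"]) (auto simp: of_nat_diff)
  qed (use c s in simp)
  also have "(\<Sum>t<N. f (m + t)) \<le> 2 * (1/c + 1/s)"
  proof -
    have "real m \<ge> b" unfolding m_def by linarith
    thus ?thesis by (intro shifted[where y = "real m - b + s"]) auto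
  qed
  finally show ?thesis unfolding f_def s_def by simp
qed

lemma sum_powr_div_square_dist_le:
  fixes b e :: real
  assumes b: "b \<ge> 1/2" and e: "0 \<le> e" "e \<le> 1/4"
  shows "(\<Sum>k<N. if 1 \<le> k \<and> real k < 2*b then real k powr e / ((real k - b)^2 + real k) else 0)
           \<le> 120 * b powr (-1/4)"
proof -
  define c where "c = b/2"
  have c: "c > 0" "c \<ge> 1/4" using b by (auto simp: c_def)
  define A where "A = (2*b) powr (1/4) * 5"
  have A: "A \<ge> 0" unfolding A_def by simp
  have term_le: "(if 1 \<le> k \<and> real k < 2*b then real k powr e / ((real k - b)^2 + real k) else 0)
      \<le> A * (1 / ((real k - b)^2 + c))" for k
  proof (cases "1 \<le> k \<and> real k < 2*b")
    case True
    hence k1: "real k \<ge> 1" and k2: "real k < 2*b" by auto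
    have "real k powr e \<le> real k powr (1/4)" using k1 e by (intro powr_mono) auto
    also have "\<dots> \<le> (2*b) powr (1/4)" using k1 k2 by (intro powr_mono2) auto
    finally have num: "real k powr e \<le> (2*b) powr (1/4)" .
    have "(real k - b)^2 + c \<le> 5 * ((real k - b)^2 + real k)"
    proof (cases "real k \<ge> c")
      case False
      hence "(b/2)^2 \<le> (b - real k)^2" using b unfolding c_def by (intro power_mono) auto
      moreover have "c / 4 \<le> (b/2)^2" using b unfolding c_def by (simp add: power2_eq_square field_simps)
      ultimately show ?thesis by (simp add: power2_commute)
    qed (use c in \<open>smt (verit) zero_le_power2\<close>)
    hence den: "1 / ((real k - b)^2 + real k) \<le> 5 / ((real k - b)^2 + c)"
      using c k1 by (simp add: field_simps add_pos_nonneg)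
    have "real k powr e / ((real k - b)^2 + real k) \<le> (2*b) powr (1/4) * (5 / ((real k - b)^2 + c))"
      using mult_mono[OF num den] k1 by (simp add: add_nonneg_pos)
    thus ?thesis using True unfolding A_def by simp
  qed (use A c in \<open>auto simp: add_nonneg_pos\<close>)
  have "(\<Sum>k<N. if 1 \<le> k \<and> real k < 2*b then real k powr e / ((real k - b)^2 + real k) else 0)
         \<le> A * (\<Sum>k<N. 1 / ((real k - b)^2 + c))"
    using term_le by (simp add: sum_distrib_left sum_mono)
  also have "\<dots> \<le> A * (4 * (1/c + 1/sqrt c))"
    by (intro mult_left_mono sum_inverse_square_dist_le c A)
  also have "\<dots> \<le> A * (12 / sqrt c)"
  proof -
    have sc: "sqrt c \<ge> 1/2" using c real_sqrt_le_mono[of "1/4" c] by (simp add: real_sqrt_divide)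
    have "1/c = (1/sqrt c) * (1/sqrt c)" using c by (simp add: field_simps)
    also have "\<dots> \<le> 2 * (1/sqrt c)" using sc c by (intro mult_right_mono) (auto simp: field_simps)
    finally show ?thesis using A by (intro mult_left_mono) auto
  qed
  also have "\<dots> = 60 * (2 powr (3/4) * b powr (-1/4))"
  proof -
    have sqrt_c: "sqrt c = b powr (1/2) / 2 powr (1/2)"
      using b by (simp add: c_def powr_half_sqrt powr_divide real_sqrt_divide)
    have "(2*b) powr (1/4) / sqrt c = (2 powr (1/4) * 2 powr (1/2)) * (b powr (1/4) / b powr (1/2))"
      unfolding sqrt_c using b by (simp add: powr_mult field_simps)
    also have "\<dots> = 2 powr (3/4) * b powr (-1/4)"
      using b by (simp add: powr_add[symmetric] powr_diff[symmetric])
    finally show ?thesis unfolding A_def by simp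
  qed
  also have "\<dots> \<le> 120 * b powr (-1/4)"
    using mult_right_mono[OF powr_mono[of "3/4" 1 "2::real"], of "b powr (-1/4)"]
    by (simp add: mult.commute)
  finally show ?thesis .
qed

lemma powr_sum_le_weighted_pos:
  fixes a w :: "'i \<Rightarrow> real" and p :: real
  assumes S: "finite S" "S \<noteq> {}" and p: "p \<ge> 1"
    and a: "\<And>n. n \<in> S \<Longrightarrow> a n > 0" and w: "\<And>n. n \<in> S \<Longrightarrow> w n > 0"
  shows "(\<Sum>n\<in>S. a n) powr p \<le> (\<Sum>n\<in>S. w n) powr (p-1) * (\<Sum>n\<in>S. w n powr (1-p) * a n powr p)"
proof -
  define W where "W = (\<Sum>n\<in>S. w n)"
  have W: "W > 0" unfolding W_def using S w by (intro sum_pos) auto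
  define v where "v n = w n / W" for n
  define y where "y n = a n / w n" for n
  have "(\<Sum>n\<in>S. v n) = 1"
    unfolding v_def W_def using W W_def by (simp add: sum_divide_distrib[symmetric])
  hence "(\<Sum>n\<in>S. v n *\<^sub>R y n) powr p \<le> (\<Sum>n\<in>S. v n * y n powr p)"
    by (intro convex_on_sum[OF S powr_convex[OF p]]) (use W w a in \<open>auto simp: v_def y_def less_imp_le\<close>)
  moreover have "(\<Sum>n\<in>S. v n *\<^sub>R y n) = (\<Sum>n\<in>S. a n) / W"
    unfolding v_def y_def sum_divide_distrib using w by (intro sum.cong) (auto simp: less_imp_neq[symmetric])
  moreover have "v n * y n powr p = (w n powr (1-p) * a n powr p) / W" if "n \<in> S" for n
    unfolding v_def y_def using w[OF that] a[OF that] by (simp add: powr_divide powr_diff)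
  ultimately have "((\<Sum>n\<in>S. a n) / W) powr p \<le> (\<Sum>n\<in>S. w n powr (1-p) * a n powr p) / W"
    by (simp add: sum_divide_distrib)
  hence "(\<Sum>n\<in>S. a n) powr p \<le> W powr p * ((\<Sum>n\<in>S. w n powr (1-p) * a n powr p) / W)"
    using a W by (simp add: powr_divide sum_nonneg less_imp_le divide_le_eq mult.commute)
  also have "\<dots> = W powr (p-1) * (\<Sum>n\<in>S. w n powr (1-p) * a n powr p)"
    using W by (simp add: powr_diff)
  finally show ?thesis unfolding W_def .
qed

lemma powr_sum_le_weighted:
  fixes a w :: "'i \<Rightarrow> real" and p :: real
  assumes S: "finite S" and p: "p \<ge> 1"
    and a: "\<And>n. n \<in> S \<Longrightarrow> a n \<ge> 0" and w: "\<And>n. n \<in> S \<Longrightarrow> w n > 0"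
  shows "(\<Sum>n\<in>S. a n) powr p \<le> (\<Sum>n\<in>S. w n) powr (p-1) * (\<Sum>n\<in>S. w n powr (1-p) * a n powr p)"
proof -
  define S' where "S' = {n\<in>S. a n > 0}"
  have sum_a: "(\<Sum>n\<in>S. a n) = (\<Sum>n\<in>S'. a n)"
    and sum_wa: "(\<Sum>n\<in>S. w n powr (1-p) * a n powr p) = (\<Sum>n\<in>S'. w n powr (1-p) * a n powr p)"
    unfolding S'_def using S a by (auto intro!: sum.mono_neutral_right simp: less_le)
  show ?thesis
  proof (cases "S' = {}")
    case False
    have "(\<Sum>n\<in>S'. a n) powr p \<le> (\<Sum>n\<in>S'. w n) powr (p-1) * (\<Sum>n\<in>S'. w n powr (1-p) * a n powr p)"
      using powr_sum_le_weighted_pos[OF _ False p] S w unfolding S'_def by auto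
    also have "\<dots> \<le> (\<Sum>n\<in>S. w n) powr (p-1) * (\<Sum>n\<in>S'. w n powr (1-p) * a n powr p)"
      using S w p unfolding S'_def
      by (intro mult_right_mono powr_mono2 sum_mono2 sum_nonneg) (auto intro: less_imp_le)
    finally show ?thesis unfolding sum_a sum_wa .
  qed (simp add: sum_a sum_wa)
qed

lemma summable_powr_suminf_le_weighted:
  fixes a w :: "nat \<Rightarrow> real" and p :: real
  assumes p: "p \<ge> 1" and a: "\<And>n. a n \<ge> 0" and w: "\<And>n. w n > 0" and sw: "summable w"
    and swa: "summable (\<lambda>n. w n powr (1-p) * a n powr p)"
  shows "summable a"
    and "(\<Sum>n. a n) powr p \<le> (\<Sum>n. w n) powr (p-1) * (\<Sum>n. w n powr (1-p) * a n powr p)"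
proof -
  define T where "T = (\<Sum>n. w n) powr (p-1) * (\<Sum>n. w n powr (1-p) * a n powr p)"
  have T: "T \<ge> 0" unfolding T_def using swa by (simp add: suminf_nonneg)
  have partial: "(\<Sum>n<N. a n) \<le> T powr (1/p)" for N
  proof -
    have "(\<Sum>n<N. a n) powr p \<le> (\<Sum>n<N. w n) powr (p-1) * (\<Sum>n<N. w n powr (1-p) * a n powr p)"
      using powr_sum_le_weighted[of "{..<N}" p a w] p a w by simp
    also have "\<dots> \<le> T"
      unfolding T_def using p sw swa w
      by (intro mult_mono powr_mono2 sum_le_suminf sum_nonneg suminf_nonneg) (auto intro: less_imp_le)
    finally have "((\<Sum>n<N. a n) powr p) powr (1/p) \<le> T powr (1/p)"
      using p by (intro powr_mono2) auto
    thus ?thesis using p a by (simp add: powr_powr sum_nonneg)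
  qed
  show sa: "summable a" by (rule summableI_nonneg_bounded[OF a partial])
  have "(\<Sum>n. a n) powr p \<le> (T powr (1/p)) powr p"
    using p a suminf_le_const[OF sa partial] by (intro powr_mono2 suminf_nonneg sa) auto
  thus "(\<Sum>n. a n) powr p \<le> (\<Sum>n. w n) powr (p-1) * (\<Sum>n. w n powr (1-p) * a n powr p)"
    using p T by (simp add: powr_powr T_def)
qed

lemma powr_mult_exp_neg_mono:
  fixes z y a :: real
  assumes "0 < z" "z \<le> y" "y \<le> a"
  shows "z powr a * exp (- z) \<le> y powr a * exp (- y)"
proof -
  have y: "y > 0" using assms by simp
  have "ln (z / y) \<le> z / y - 1" using assms y by (intro ln_le_minus_one) simp
  hence "ln y - ln z \<ge> (y - z) / y" using assms y by (simp add: ln_div field_simps)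
  moreover have "(y - z) / y * a \<ge> y - z"
    using assms y mult_nonneg_nonneg[of "a-y" "y-z"] by (simp add: field_simps)
  moreover have "a \<ge> 0" using assms by simp
  ultimately have "a * (ln y - ln z) \<ge> y - z"
    by (smt (verit) mult.commute mult_right_mono)
  hence "exp (a * ln z - z) \<le> exp (a * ln y - y)" by (simp add: algebra_simps)
  thus ?thesis using assms y by (simp add: powr_def exp_diff exp_minus field_simps)
qed

lemma power_div_fact_le_exp:
  fixes x :: real
  assumes "x \<ge> 0"
  shows "x ^ n / fact n \<le> exp x"
proof -
  have "(\<Sum>m\<in>{n}. x ^ m /\<^sub>R fact m) \<le> (\<Sum>m. x ^ m /\<^sub>R fact m)"
    by (rule sum_le_suminf[OF summable_exp_generic]) (use assms in auto)
  thus ?thesis by (simp add: exp_def divide_inverse mult.commute)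
qed

lemma summable_of_nat_mult_power:
  fixes \<rho> :: real
  assumes "0 \<le> \<rho>" "\<rho> < 1"
  shows "summable (\<lambda>n. real n * \<rho> ^ n)"
proof (rule summable_ratio_test[where c="(1+\<rho>)/2" and N="nat \<lceil>2*\<rho>/(1-\<rho>)\<rceil> + 1"])
  show "(1+\<rho>)/2 < 1" using assms by simp
  fix n assume "n \<ge> nat \<lceil>2*\<rho>/(1-\<rho>)\<rceil> + 1"
  hence "real n \<ge> 2*\<rho>/(1-\<rho>)" by linarith
  hence "(real n + 1) * \<rho> \<le> (1+\<rho>)/2 * real n" using assms by (simp add: field_simps)
  hence "(real n + 1) * \<rho> * \<rho>^n \<le> (1+\<rho>)/2 * real n * \<rho>^n"
    using assms by (intro mult_right_mono) auto
  thus "norm (real (Suc n) * \<rho> ^ Suc n) \<le> (1+\<rho>)/2 * norm (real n * \<rho> ^ n)"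
    using assms by (simp add: algebra_simps)
qed

lemma exp_half_less_2: "exp (1/2::real) < 2"
proof -
  have "exp (1/2::real) ^ 2 = exp 1" by (simp add: exp_of_nat_mult[symmetric])
  also have "\<dots> < 2 ^ 2" using exp_le by simp
  finally show ?thesis by (rule power_less_imp_less_base) simp
qed

text \<open>For \<open>Z\<close> with density \<open>erlang_density (k-1) 1\<close> (a sum of \<open>k\<close> standard exponentials),
  \<open>erlang_lower_moment k p\<close> is the expectation of \<open>(2/Z) powr p\<close> on the event \<open>Z < k/2\<close>.\<close>

definition erlang_lower_moment :: "nat \<Rightarrow> real \<Rightarrow> ennreal" where
  "erlang_lower_moment k p =
     (\<integral>\<^sup>+ z. ennreal (erlang_density (k-1) 1 z) * ennreal ((2/z) powr p * indicator {0<..<real k/2} z) \<partial>lborel)"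

lemma erlang_density_mult_powr:
  assumes "z > 0" "k \<ge> 1"
  shows "erlang_density (k-1) 1 z * (2/z) powr p
         = 2 powr p / fact (k-1) * (z powr (real k - p - 1) * exp (- z))"
proof -
  have "z ^ (k-1) = z powr (real k - 1)"
    using powr_realpow[of z "k-1"] assms by (simp add: of_nat_diff)
  moreover have "z powr (real k - 1) / z powr p = z powr (real k - p - 1)"
    using assms by (simp add: powr_diff[symmetric] algebra_simps)
  ultimately show ?thesis
    using assms by (simp add: erlang_density_def powr_divide field_simps)
qed

lemma erlang_lower_moment_finite:
  assumes "k \<ge> 1" "0 \<le> p" "p < real k"
  shows "erlang_lower_moment k p < \<infinity>"
proof -
  define C where "C = 2 powr p / fact (k-1)"
  have integrand_le: "ennreal (erlang_density (k-1) 1 z) * ennreal ((2/z) powr p * indicator {0<..<real k/2} z)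
     \<le> ennreal C * ennreal (indicator {0..} z * z powr ((real k - p) - 1) / exp z)" for z
  proof (cases "z \<in> {0<..<real k/2}")
    case True
    hence "z > 0" by simp
    thus ?thesis
      using True erlang_density_mult_powr[of z k p] assms
      by (simp add: C_def ennreal_mult[symmetric] exp_minus field_simps)
  qed simp
  have "erlang_lower_moment k p
     \<le> (\<integral>\<^sup>+ z. ennreal C * ennreal (indicator {0..} z * z powr ((real k - p) - 1) / exp z) \<partial>lborel)"
    unfolding erlang_lower_moment_def by (intro nn_integral_mono integrand_le)
  also have "\<dots> = ennreal C * ennreal (Gamma (real k - p))"
    using Gamma_conv_nn_integral_real[of "real k - p"] assms by (simp add: nn_integral_cmult)
  also have "\<dots> < \<infinity>" by (simp add: ennreal_mult_less_top)
  finally show ?thesis .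
qed

text \<open>On \<open>(0, k/2)\<close> the integrand is increasing, so it is bounded by its value at \<open>k/2\<close>.\<close>

lemma erlang_lower_moment_le:
  assumes "k \<ge> 1" "0 \<le> p" "2*p + 2 \<le> real k"
  shows "erlang_lower_moment k p
     \<le> ennreal (2 powr p / fact (k-1) * ((real k/2) powr (real k - p - 1) * exp (- (real k/2))) * (real k/2))"
proof -
  define C where "C = 2 powr p / fact (k-1) * ((real k/2) powr (real k - p - 1) * exp (- (real k/2)))"
  have C: "C \<ge> 0" unfolding C_def by simp
  have integrand_le: "ennreal (erlang_density (k-1) 1 z) * ennreal ((2/z) powr p * indicator {0<..<real k/2} z)
     \<le> ennreal C * indicator {0<..<real k/2} z" for z
  proof (cases "z \<in> {0<..<real k/2}")
    case True
    hence z: "z > 0" "z \<le> real k/2" by auto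
    have "erlang_density (k-1) 1 z * (2/z) powr p \<le> C"
      unfolding erlang_density_mult_powr[OF z(1) assms(1)] C_def using z assms
      by (intro mult_left_mono powr_mult_exp_neg_mono) auto
    thus ?thesis using True by (simp add: ennreal_mult[symmetric] ennreal_leI)
  qed simp
  have "erlang_lower_moment k p \<le> (\<integral>\<^sup>+ z. ennreal C * indicator {0<..<real k/2} z \<partial>lborel)"
    unfolding erlang_lower_moment_def by (intro nn_integral_mono integrand_le)
  also have "\<dots> = ennreal C * emeasure lborel {0<..<real k/2}"
    by (rule nn_integral_cmult_indicator) simp
  also have "\<dots> = ennreal (C * (real k/2))"
    using ennreal_mult'[OF C, of "real k/2"] by simp
  finally show ?thesis unfolding C_def .
qed

lemma erlang_lower_moment_decay:
  fixes p e :: real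
  assumes k: "k \<ge> 1" and p: "0 \<le> p" "2*p + 2 \<le> real k" and e: "0 \<le> e" "e \<le> 1"
  shows "ennreal (real k powr (p - 1 + e)) * erlang_lower_moment k p
         \<le> ennreal (4 powr p * (real k * (exp (1/2) / 2) ^ k))"
proof -
  have K: "real k > 0" using k by simp
  have "real k powr (p - 1 + e) *
          (2 powr p / fact (k-1) * ((real k/2) powr (real k - p - 1) * exp (- (real k/2))) * (real k/2))
       = 4 powr p * real k powr e * (real k ^ k / fact k) * (exp (- (real k/2)) / 2 ^ k)"
  proof -
    have "fact k = real k * fact (k-1)" using k fact_reduce[of k, where ?'a=real] by simp
    moreover have "(4::real) powr p = 2 powr p * 2 powr p"
      by (simp add: powr_add[symmetric] powr_powr[of 2 2 p, simplified])
    ultimately show ?thesis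
      using K by (simp add: powr_diff powr_add powr_divide powr_realpow field_simps)
  qed
  also have "\<dots> \<le> 4 powr p * real k * exp (real k) * (exp (- (real k/2)) / 2 ^ k)"
  proof -
    have "real k powr e \<le> real k" using powr_mono[of e 1 "real k"] k e by simp
    moreover have "real k ^ k / fact k \<le> exp (real k)" by (rule power_div_fact_le_exp) simp
    ultimately show ?thesis by (intro mult_right_mono mult_mono) auto
  qed
  also have "\<dots> = 4 powr p * (real k * (exp (1/2) / 2) ^ k)"
    by (simp add: power_divide exp_of_nat_mult[symmetric] exp_add[symmetric])
  finally have real_bound: "real k powr (p - 1 + e) *
          (2 powr p / fact (k-1) * ((real k/2) powr (real k - p - 1) * exp (- (real k/2))) * (real k/2))
       \<le> 4 powr p * (real k * (exp (1/2) / 2) ^ k)" .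
  have "ennreal (real k powr (p - 1 + e)) * erlang_lower_moment k p
      \<le> ennreal (real k powr (p - 1 + e)) *
          ennreal (2 powr p / fact (k-1) * ((real k/2) powr (real k - p - 1) * exp (- (real k/2))) * (real k/2))"
    using erlang_lower_moment_le[OF k p] by (rule mult_left_mono) simp
  also have "\<dots> \<le> ennreal (4 powr p * (real k * (exp (1/2) / 2) ^ k))"
    using real_bound by (simp add: ennreal_mult'[symmetric] ennreal_leI)
  finally show ?thesis .
qed

lemma weighted_erlang_lower_moment_summable:
  fixes p e :: real
  assumes p: "0 \<le> p" "p < real K" and e: "0 \<le> e" "e \<le> 1"
  shows "(\<Sum>n. ennreal (real (n+K) powr (p - 1 + e)) * erlang_lower_moment (n+K) p) < \<infinity>"
proof -
  define x where "x n = ennreal (real (n+K) powr (p - 1 + e)) * erlang_lower_moment (n+K) p" for n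
  have "x n < \<infinity>" for n
    using erlang_lower_moment_finite[of "n+K" p] p unfolding x_def by (simp add: ennreal_mult_less_top)
  define y where "y n = enn2real (x n)" for n
  have xy: "x n = ennreal (y n)" and y0: "y n \<ge> 0" for n
    unfolding y_def using \<open>x n < \<infinity>\<close> by simp_all
  define \<rho> :: real where "\<rho> = exp (1/2) / 2"
  have \<rho>: "0 \<le> \<rho>" "\<rho> < 1" unfolding \<rho>_def using exp_half_less_2 by auto
  define g where "g n = 4 powr p * (real (n+K) * \<rho> ^ (n+K))" for n
  have "summable g"
    unfolding g_def using summable_of_nat_mult_power[OF \<rho>] summable_iff_shift[of "\<lambda>m. real m * \<rho> ^ m" K]
    by (intro summable_mult) simp
  moreover have "eventually (\<lambda>n. norm (y n) \<le> g n) sequentially"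
    using eventually_ge_at_top[of "nat \<lceil>2*p + 2\<rceil>"]
  proof eventually_elim
    case (elim n)
    hence "2*p + 2 \<le> real (n+K)" by linarith
    have "x n \<le> ennreal (g n)"
      unfolding x_def g_def \<rho>_def using \<open>2*p + 2 \<le> real (n+K)\<close> p e by (intro erlang_lower_moment_decay) auto
    hence "y n \<le> g n"
      unfolding y_def using enn2real_mono[of "x n" "ennreal (g n)"] \<rho> by (simp add: g_def)
    thus ?case using y0[of n] by simp
  qed
  ultimately have "summable y" using summable_comparison_test_ev by blast
  hence "(\<Sum>n. x n) = ennreal (\<Sum>n. y n)" unfolding xy by (rule suminf_ennreal2[OF y0])
  thus ?thesis unfolding x_def by simp
qed

lemma suminf_ennreal_swap:
  fixes G :: "nat \<Rightarrow> nat \<Rightarrow> ennreal"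
  shows "(\<Sum>n. \<Sum>i. G n i) = (\<Sum>i. \<Sum>n. G n i)"
proof -
  have "(\<Sum>n. \<Sum>i. G n i) = (\<integral>\<^sup>+ n. (\<Sum>i. G n i) \<partial>count_space UNIV)"
    by (rule nn_integral_count_space_nat[symmetric])
  also have "\<dots> = (\<Sum>i. \<integral>\<^sup>+ n. G n i \<partial>count_space UNIV)"
    by (rule nn_integral_suminf) simp
  also have "\<dots> = (\<Sum>i. \<Sum>n. G n i)" by (simp add: nn_integral_count_space_nat)
  finally show ?thesis .
qed

lemma Psi_measurable [measurable]: "Psi \<in> borel_measurable borel"
  unfolding Psi_def[abs_def] frac_def using borel_measurable_real_floor by measurable

locale exponential_arrivals = prob_space M for M :: "'a measure" +
  fixes E :: "nat \<Rightarrow> 'a \<Rightarrow> real" and \<gamma> :: real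
  assumes indep_E: "indep_vars (\<lambda>_. borel) E {1..}"
    and distributed_E: "\<And>i. i \<ge> 1 \<Longrightarrow> distributed M lborel (E i) (exponential_density 1)"
    and gamma_pos: "\<gamma> > 0"
begin

definition Z :: "nat \<Rightarrow> 'a \<Rightarrow> real" where
  "Z k \<omega> = (\<Sum>i\<in>{1..k}. E i \<omega>)"

definition dev :: "nat \<Rightarrow> 'a \<Rightarrow> real" where
  "dev k \<omega> = \<bar>Psi (Z k \<omega> / \<gamma>) / Z k \<omega> - Psi (real k / \<gamma>) / real k\<bar>"

lemma Z_measurable [measurable]: "Z k \<in> borel_measurable M"
  unfolding Z_def[abs_def] using distributed_measurable[OF distributed_E] by simp

lemma dev_measurable [measurable]: "dev k \<in> borel_measurable M"
  unfolding dev_def[abs_def] by measurable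

lemma distributed_Z:
  assumes "k \<ge> 1"
  shows "distributed M lborel (Z k) (erlang_density (k-1) 1)"
proof -
  have "distributed M lborel (\<lambda>x. \<Sum>i\<in>{1..k}. E i x) (erlang_density (card {1..k} - 1) 1)"
    by (rule exponential_distributed_sum) (use assms distributed_E indep_vars_subset[OF indep_E] in auto)
  thus ?thesis unfolding Z_def[abs_def] by simp
qed

lemma AE_Z_pos:
  assumes "k \<ge> 1"
  shows "AE \<omega> in M. Z k \<omega> > 0"
proof -
  have "AE x in lborel. 0 < ennreal (erlang_density (k-1) 1 x) \<longrightarrow> x > 0"
    using AE_lborel_singleton[of 0] by eventually_elim (auto simp: erlang_density_def)
  thus ?thesis by (subst distributed_AE2[OF distributed_Z[OF assms]]) simp_all
qed

lemma nn_integral_Z_centered_square: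
  assumes "k \<ge> 1"
  shows "(\<integral>\<^sup>+ \<omega>. ennreal ((Z k \<omega> - real k)^2 + real k) \<partial>M) = ennreal (2 * real k)"
proof -
  note D = distributed_Z[OF assms]
  have i1: "integrable M (\<lambda>x. Z k x ^ 1)" and i2: "integrable M (\<lambda>x. Z k x ^ 2)"
    by (rule erlang_ith_moment_integrable[OF _ D], simp)+
  have m1: "expectation (\<lambda>x. Z k x ^ 1) = real k"
    using erlang_ith_moment[OF _ D, of 1] assms by (simp add: fact_reduce[of k])
  have "fact (k - 1 + 2) = (fact (k-1) :: real) * (real k * (real k + 1))"
    using assms by (cases k) (auto simp: algebra_simps)
  hence m2: "expectation (\<lambda>x. Z k x ^ 2) = real k * (real k + 1)"
    using erlang_ith_moment[OF _ D, of 2] by simp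
  have eq: "(\<lambda>\<omega>. (Z k \<omega> - real k)^2 + real k)
      = (\<lambda>\<omega>. Z k \<omega> ^ 2 - 2 * real k * Z k \<omega> ^ 1 + (real k ^ 2 + real k))"
    by (rule ext) (simp add: power2_eq_square algebra_simps)
  have "integrable M (\<lambda>\<omega>. (Z k \<omega> - real k)^2 + real k)"
    unfolding eq using i1 i2 by auto
  hence "(\<integral>\<^sup>+ \<omega>. ennreal ((Z k \<omega> - real k)^2 + real k) \<partial>M)
      = ennreal (expectation (\<lambda>\<omega>. (Z k \<omega> - real k)^2 + real k))"
    by (rule nn_integral_eq_integral) simp
  also have "expectation (\<lambda>\<omega>. (Z k \<omega> - real k)^2 + real k) = 2 * real k"
    unfolding eq using i1 i2 m1 m2 by (simp add: prob_space power2_eq_square algebra_simps)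
  finally show ?thesis .
qed

text \<open>The points \<open>\<gamma> * 2 powr j\<close> above \<open>1/2\<close>, in increasing order.\<close>

definition dyadic_offset :: int where
  "dyadic_offset = \<lceil>log 2 (1 / (2*\<gamma>))\<rceil>"

definition dyadic :: "nat \<Rightarrow> real" where
  "dyadic i = \<gamma> * 2 powr (real_of_int (dyadic_offset + int i))"

lemma ex_dyadic_eq:
  fixes j :: int
  assumes "\<gamma> * 2 powr j > 1/2"
  shows "\<exists>i. dyadic i = \<gamma> * 2 powr j"
proof -
  have "log 2 (1 / (2*\<gamma>)) < j"
    using assms gamma_pos by (subst log_less_iff) (auto simp: field_simps)
  hence "j = dyadic_offset + int (nat (j - dyadic_offset))"
    unfolding dyadic_offset_def by linarith
  thus ?thesis unfolding dyadic_def by (intro exI[of _ "nat (j - dyadic_offset)"]) metis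
qed

lemma dyadic_ge_half: "dyadic i \<ge> 1/2"
proof -
  have "log 2 (1 / (2*\<gamma>)) \<le> real_of_int (dyadic_offset + int i)"
    unfolding dyadic_offset_def by linarith
  hence "1 / (2*\<gamma>) \<le> 2 powr (real_of_int (dyadic_offset + int i))"
    using gamma_pos by (subst (asm) log_le_iff) auto
  thus ?thesis unfolding dyadic_def using gamma_pos by (simp add: field_simps)
qed

lemma dyadic_eq_geometric: "dyadic i = dyadic 0 * 2 ^ i"
proof -
  have "2 powr (real_of_int (dyadic_offset + int i)) = 2 powr (real_of_int dyadic_offset) * 2 powr (real i)"
    by (simp add: powr_add)
  thus ?thesis unfolding dyadic_def by (simp add: powr_realpow)
qed

lemma summable_dyadic_powr: "summable (\<lambda>i. dyadic i powr (-1/4))"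
proof -
  have pos: "dyadic 0 > 0" using dyadic_ge_half[of 0] by simp
  have "dyadic i powr (-1/4) = dyadic 0 powr (-1/4) * (2 powr (-1/4)) ^ i" for i
  proof -
    have "dyadic i powr (-1/4) = dyadic 0 powr (-1/4) * ((2::real) ^ i) powr (-1/4)"
      unfolding dyadic_eq_geometric[of i] using pos by (simp add: powr_mult)
    also have "((2::real) ^ i) powr (-1/4) = (2 powr real i) powr (-1/4)"
      by (simp add: powr_realpow)
    also have "\<dots> = (2 powr (-1/4)) powr real i"
      by (simp add: powr_powr mult.commute)
    also have "\<dots> = (2 powr (-1/4)) ^ i"
      by (rule powr_realpow) simp
    finally show ?thesis .
  qed
  hence "(\<lambda>i. dyadic i powr (-1/4)) = (\<lambda>i. dyadic 0 powr (-1/4) * (2 powr (-1/4)) ^ i)"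
    by (rule ext)
  moreover have "summable (\<lambda>i. dyadic 0 powr (-1/4) * (2 powr (-1/4)) ^ i)"
    by (intro summable_mult summable_geometric) (simp add: powr_less_one)
  ultimately show ?thesis by (simp only:)
qed

text \<open>Chebyshev weights: if \<open>Z k\<close> and \<open>k\<close> are separated by \<open>dyadic i > k/2\<close>, then
  \<open>(Z k - k)\<^sup>2 \<ge> (k - dyadic i)\<^sup>2\<close>, and the \<open>i\<close>-th weight times \<open>(Z k - k)\<^sup>2 + k\<close> is at least \<open>1\<close>.\<close>

definition cheb_weight :: "nat \<Rightarrow> nat \<Rightarrow> real" where
  "cheb_weight k i = (if dyadic i > real k / 2 then 2 / ((real k - dyadic i)^2 + real k) else 0)"

lemma cheb_weight_nonneg: "cheb_weight k i \<ge> 0"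
  unfolding cheb_weight_def by simp

lemma exists_dyadic_near_if_Psi_ratio_neq:
  assumes k: "k \<ge> 1" and z: "z \<ge> real k / 2"
    and neq: "Psi (z / \<gamma>) / z \<noteq> Psi (real k / \<gamma>) / real k"
  shows "\<exists>i. real k / 2 < dyadic i \<and> (real k - dyadic i)^2 \<le> (z - real k)^2"
proof -
  obtain j :: int where j: "min z (real k) < \<gamma> * 2 powr j" "\<gamma> * 2 powr j \<le> max z (real k)"
    using dyadic_between_if_Psi_ratio_neq[OF _ _ gamma_pos neq] k z by auto
  have "min z (real k) \<ge> real k / 2" using z by simp
  hence "\<gamma> * 2 powr j > 1/2" using j(1) k by simp
  then obtain i where i: "dyadic i = \<gamma> * 2 powr j" using ex_dyadic_eq by blast
  have "\<bar>real k - dyadic i\<bar> \<le> \<bar>z - real k\<bar>"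
  proof (cases "z < real k")
    case True
    hence "z < dyadic i" "dyadic i \<le> real k" using i j by (simp_all add: min_def max_def)
    thus ?thesis by arith
  next
    case False
    hence "min z (real k) = real k" "max z (real k) = z" by simp_all
    hence "real k < dyadic i" "dyadic i \<le> z" using i j by simp_all
    thus ?thesis by arith
  qed
  hence "(real k - dyadic i)^2 \<le> (z - real k)^2"
    by (simp only: abs_le_square_iff)
  moreover have "real k / 2 < dyadic i"
    using i j(1) \<open>min z (real k) \<ge> real k / 2\<close> by linarith
  ultimately show ?thesis by blast
qed

lemma Psi_ratio_diff_powr_le:
  fixes z p :: real
  assumes z: "z > 0" and k: "k \<ge> 1" and p: "p \<ge> 0"
  shows "ennreal (\<bar>Psi (z / \<gamma>) / z - Psi (real k / \<gamma>) / real k\<bar> powr p)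
     \<le> ennreal ((2/z) powr p * indicator {0<..<real k/2} z)
        + ennreal ((4 / real k) powr p) * ((\<Sum>i. ennreal (cheb_weight k i)) * ennreal ((z - real k)^2 + real k))"
    (is "_ \<le> ?small + ?cheb")
proof -
  define h where "h = \<bar>Psi (z / \<gamma>) / z - Psi (real k / \<gamma>) / real k\<bar>"
  have h_le: "h \<le> 2 / min z (real k)"
    unfolding h_def using Psi_ratio_diff_le[OF z _ gamma_pos, of "real k"] k by simp
  have h0: "h \<ge> 0" unfolding h_def by simp
  consider "z < real k / 2" | "h = 0" | "z \<ge> real k / 2" "h \<noteq> 0" by linarith
  hence "ennreal (h powr p) \<le> ?small + ?cheb"
  proof cases
    case 1
    hence "min z (real k) = z" by simp
    hence "h powr p \<le> (2/z) powr p"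
      using h_le h0 p by (intro powr_mono2) auto
    hence "ennreal (h powr p) \<le> ?small" using 1 z by (simp add: ennreal_leI)
    thus ?thesis by (rule order_trans) simp
  next
    case 3
    have "Psi (z / \<gamma>) / z \<noteq> Psi (real k / \<gamma>) / real k" using 3 unfolding h_def by auto
    then obtain i where i: "real k / 2 < dyadic i" "(real k - dyadic i)^2 \<le> (z - real k)^2"
      using exists_dyadic_near_if_Psi_ratio_neq k 3(1) by blast
    have "(real k - dyadic i)^2 + real k \<le> 2 * ((z - real k)^2 + real k)"
      using i(2) zero_le_power2[of "z - real k"] of_nat_0_le_iff[of k, where ?'a=real]
      by (smt (verit))
    hence "1 \<le> cheb_weight k i * ((z - real k)^2 + real k)"
      using i(1) k by (simp add: cheb_weight_def field_simps add_pos_nonneg)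
    hence "(1::ennreal) \<le> ennreal (cheb_weight k i * ((z - real k)^2 + real k))"
      by (simp add: ennreal_leI)
    also have "\<dots> = ennreal (cheb_weight k i) * ennreal ((z - real k)^2 + real k)"
      using cheb_weight_nonneg by (simp add: ennreal_mult)
    also have "\<dots> \<le> (\<Sum>i. ennreal (cheb_weight k i)) * ennreal ((z - real k)^2 + real k)"
      using sum_le_suminf[OF summableI, of "{i}" "\<lambda>i. ennreal (cheb_weight k i)"]
      by (intro mult_right_mono) simp_all
    finally have one_le: "1 \<le> (\<Sum>i. ennreal (cheb_weight k i)) * ennreal ((z - real k)^2 + real k)" .
    have "real k / 2 \<le> min z (real k)" using 3(1) by simp
    hence "2 / min z (real k) \<le> 2 / (real k / 2)"
      using k by (intro divide_left_mono) auto
    hence "h \<le> 4 / real k" using h_le by simp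
    hence "ennreal (h powr p) \<le> ennreal ((4 / real k) powr p) * 1"
      unfolding h_def using p by (simp add: ennreal_leI powr_mono2)
    also have "\<dots> \<le> ?cheb" by (intro mult_left_mono one_le) simp
    finally show ?thesis by (rule order_trans) simp
  qed (use p in simp)
  thus ?thesis unfolding h_def .
qed

lemma nn_integral_dev_powr_le:
  assumes k: "k \<ge> 1" and p: "p \<ge> 0"
  shows "(\<integral>\<^sup>+ \<omega>. ennreal (dev k \<omega> powr p) \<partial>M)
     \<le> erlang_lower_moment k p + ennreal (2 * 4 powr p * real k powr (1 - p)) * (\<Sum>i. ennreal (cheb_weight k i))"
proof -
  define S where "S = (\<Sum>i. ennreal (cheb_weight k i))"
  define c where "c = ennreal ((4 / real k) powr p)"
  have "AE \<omega> in M. ennreal (dev k \<omega> powr p)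
      \<le> ennreal ((2 / Z k \<omega>) powr p * indicator {0<..<real k/2} (Z k \<omega>))
           + c * (S * ennreal ((Z k \<omega> - real k)^2 + real k))"
    using AE_Z_pos[OF k] unfolding dev_def S_def c_def
    by eventually_elim (rule Psi_ratio_diff_powr_le[OF _ k p])
  hence "(\<integral>\<^sup>+ \<omega>. ennreal (dev k \<omega> powr p) \<partial>M)
     \<le> (\<integral>\<^sup>+ \<omega>. ennreal ((2 / Z k \<omega>) powr p * indicator {0<..<real k/2} (Z k \<omega>))
           + c * (S * ennreal ((Z k \<omega> - real k)^2 + real k)) \<partial>M)"
    by (rule nn_integral_mono_AE)
  also have "\<dots> = (\<integral>\<^sup>+ \<omega>. ennreal ((2 / Z k \<omega>) powr p * indicator {0<..<real k/2} (Z k \<omega>)) \<partial>M)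
           + c * (S * (\<integral>\<^sup>+ \<omega>. ennreal ((Z k \<omega> - real k)^2 + real k) \<partial>M))"
    by (subst nn_integral_add) (simp_all add: nn_integral_cmult)
  also have "(\<integral>\<^sup>+ \<omega>. ennreal ((2 / Z k \<omega>) powr p * indicator {0<..<real k/2} (Z k \<omega>)) \<partial>M)
      = erlang_lower_moment k p"
    unfolding erlang_lower_moment_def
    by (rule distributed_nn_integral[OF distributed_Z[OF k], symmetric]) measurable
  also have "c * (S * (\<integral>\<^sup>+ \<omega>. ennreal ((Z k \<omega> - real k)^2 + real k) \<partial>M))
      = ennreal ((4 / real k) powr p * (2 * real k)) * S"
    unfolding nn_integral_Z_centered_square[OF k] c_def by (simp add: ennreal_mult mult_ac)
  also have "(4 / real k) powr p * (2 * real k) = 2 * 4 powr p * real k powr (1 - p)"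
    using k by (simp add: powr_divide powr_diff)
  finally show ?thesis unfolding S_def .
qed

lemma suminf_powr_cheb_weight_le:
  fixes e :: real
  assumes K: "K \<ge> 1" and e: "0 \<le> e" "e \<le> 1/4"
  shows "(\<Sum>n. ennreal (real (n+K) powr e * cheb_weight (n+K) i)) \<le> ennreal (240 * dyadic i powr (-1/4))"
proof -
  define b where "b = dyadic i"
  have b: "b \<ge> 1/2" unfolding b_def by (rule dyadic_ge_half)
  define g where
    "g k = (if 1 \<le> k \<and> real k < 2*b then real k powr e / ((real k - b)^2 + real k) else 0)" for k :: nat
  have g0: "g k \<ge> 0" for k unfolding g_def by (auto simp: add_nonneg_pos)
  have term_eq: "real (n+K) powr e * cheb_weight (n+K) i = 2 * g (n+K)" for n
    unfolding g_def cheb_weight_def b_def using K by auto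
  define N where "N = nat \<lceil>2*b\<rceil>"
  have "(\<Sum>n. ennreal (real (n+K) powr e * cheb_weight (n+K) i)) = (\<Sum>n<N. ennreal (2 * g (n+K)))"
    unfolding term_eq
    by (rule suminf_finite) (auto simp: g_def N_def not_less dest!: nat_le_iff[THEN iffD1])
  also have "\<dots> = ennreal (2 * (\<Sum>n<N. g (n+K)))"
    using g0 by (simp add: sum_distrib_left)
  also have "\<dots> \<le> ennreal (2 * (120 * b powr (-1/4)))"
  proof (intro ennreal_leI mult_left_mono)
    have "(\<Sum>n<N. g (n+K)) = (\<Sum>m\<in>{K..<N+K}. g m)"
      using sum.shift_bounds_nat_ivl[of g 0 K N] by (simp add: atLeast0LessThan)
    also have "\<dots> \<le> (\<Sum>m<N+K. g m)" using g0 by (intro sum_mono2) auto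
    also have "\<dots> \<le> 120 * b powr (-1/4)"
      unfolding g_def by (rule sum_powr_div_square_dist_le[OF b e])
    finally show "(\<Sum>n<N. g (n+K)) \<le> 120 * b powr (-1/4)" .
  qed simp
  finally show ?thesis unfolding b_def by simp
qed

lemma weighted_cheb_weight_summable:
  fixes e :: real
  assumes K: "K \<ge> 1" and e: "0 \<le> e" "e \<le> 1/4"
  shows "(\<Sum>n. \<Sum>i. ennreal (real (n+K) powr e * cheb_weight (n+K) i)) < \<infinity>"
proof -
  have "(\<Sum>n. \<Sum>i. ennreal (real (n+K) powr e * cheb_weight (n+K) i))
      = (\<Sum>i. \<Sum>n. ennreal (real (n+K) powr e * cheb_weight (n+K) i))"
    by (rule suminf_ennreal_swap)
  also have "\<dots> \<le> (\<Sum>i. ennreal (240 * dyadic i powr (-1/4)))"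
    by (intro suminf_le summableI suminf_powr_cheb_weight_le K e)
  also have "\<dots> = ennreal (\<Sum>i. 240 * dyadic i powr (-1/4))"
    by (intro suminf_ennreal2 summable_mult summable_dyadic_powr) simp
  finally show ?thesis by (simp add: order_le_less_trans)
qed

lemma weighted_dev_moment_summable:
  fixes p e :: real
  assumes p: "1 \<le> p" "p < real K" and e: "0 \<le> e" "e \<le> 1/4"
  shows "(\<Sum>n. ennreal (real (n+K) powr (p - 1 + e)) * (\<integral>\<^sup>+ \<omega>. ennreal (dev (n+K) \<omega> powr p) \<partial>M)) < \<infinity>"
proof -
  have K: "K \<ge> 1" using p by simp
  define C where "C = ennreal (2 * 4 powr p)"
  define X where "X n = ennreal (real (n+K) powr (p - 1 + e)) * erlang_lower_moment (n+K) p" for n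
  define Y where "Y n = (\<Sum>i. ennreal (real (n+K) powr e * cheb_weight (n+K) i))" for n
  have "ennreal (real (n+K) powr (p - 1 + e)) * (\<integral>\<^sup>+ \<omega>. ennreal (dev (n+K) \<omega> powr p) \<partial>M)
      \<le> X n + C * Y n" for n
  proof -
    define k where "k = real (n+K)"
    have k: "k > 0" unfolding k_def using K by simp
    define S where "S = (\<Sum>i. ennreal (cheb_weight (n+K) i))"
    have bound: "ennreal (k powr (p - 1 + e)) * (\<integral>\<^sup>+ \<omega>. ennreal (dev (n+K) \<omega> powr p) \<partial>M)
        \<le> ennreal (k powr (p - 1 + e)) * (erlang_lower_moment (n+K) p
            + ennreal (2 * 4 powr p * k powr (1 - p)) * S)"
      unfolding k_def S_def using K p by (intro mult_left_mono nn_integral_dev_powr_le) auto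
    have cheb: "ennreal (k powr (p - 1 + e)) * (ennreal (2 * 4 powr p * k powr (1 - p)) * S)
        = C * (ennreal (k powr e) * S)"
    proof -
      have "k powr (p - 1 + e) * (2 * 4 powr p * k powr (1 - p)) = 2 * 4 powr p * k powr e"
        by (simp add: powr_add[symmetric])
      hence "ennreal (k powr (p - 1 + e)) * ennreal (2 * 4 powr p * k powr (1 - p)) = C * ennreal (k powr e)"
        unfolding C_def by (simp add: ennreal_mult'[symmetric])
      thus ?thesis by (metis mult.assoc)
    qed
    have "ennreal (k powr e) * S = Y n"
      unfolding Y_def S_def k_def using cheb_weight_nonneg by (simp add: ennreal_mult)
    with bound cheb show ?thesis unfolding X_def k_def distrib_left by simp
  qed
  hence "(\<Sum>n. ennreal (real (n+K) powr (p - 1 + e)) * (\<integral>\<^sup>+ \<omega>. ennreal (dev (n+K) \<omega> powr p) \<partial>M))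
      \<le> (\<Sum>n. X n + C * Y n)"
    by (intro suminf_le summableI)
  also have "\<dots> = (\<Sum>n. X n) + C * (\<Sum>n. Y n)"
    by (subst suminf_add[symmetric]) (auto intro: summableI)
  also have "\<dots> < \<infinity>"
    using weighted_erlang_lower_moment_summable[of p K e] weighted_cheb_weight_summable[OF K e] p e
    unfolding X_def Y_def C_def by (simp add: ennreal_mult_less_top)
  finally show ?thesis .
qed

text \<open>With weights \<open>w n = (n+K) powr -(1 + 1/(4p))\<close> one has \<open>w n powr (1-p) = (n+K) powr (p - 1 + e)\<close>
  for \<open>e = (p-1)/(4p) \<le> 1/4\<close>, so the weighted power-mean inequality and the summability above
  bound \<open>(\<Sum>n. dev (n+K)) powr p\<close> by an integrable function.\<close>

lemma
  fixes p :: real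
  assumes p: "1 \<le> p" "p < real K"
  shows AE_summable_dev_shift: "AE \<omega> in M. summable (\<lambda>n. dev (n+K) \<omega>)"
    and integrable_suminf_dev_powr: "integrable M (\<lambda>\<omega>. (\<Sum>n. dev (n+K) \<omega>) powr p)"
proof -
  have K: "K \<ge> 1" using p by simp
  define e where "e = (p-1) / (4*p)"
  have e: "0 \<le> e" "e \<le> 1/4" using p by (auto simp: e_def field_simps)
  define u where "u n = real (n+K) powr (p - 1 + e)" for n
  define w where "w n = real (n+K) powr (-(1 + 1/(4*p)))" for n
  have w: "w n > 0" for n unfolding w_def using K by simp
  have wu: "w n powr (1-p) = u n" for n
  proof -
    have "w n powr (1-p) = real (n+K) powr (-(1 + 1/(4*p)) * (1-p))"
      unfolding w_def by (rule powr_powr)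
    also have "-(1 + 1/(4*p)) * (1-p) = p - 1 + e"
      unfolding e_def using p by (simp add: field_simps)
    finally show ?thesis unfolding u_def .
  qed
  have sw: "summable w"
    unfolding w_def using p summable_iff_shift[of "\<lambda>n. real n powr (-(1 + 1/(4*p)))" K]
    by (simp add: summable_real_powr_iff)
  define W where "W = (\<Sum>n. w n)"
  define R where "R \<omega> = (\<Sum>n. ennreal (u n * dev (n+K) \<omega> powr p))" for \<omega>
  have R_measurable [measurable]: "R \<in> borel_measurable M" unfolding R_def by measurable
  have "(\<integral>\<^sup>+ \<omega>. R \<omega> \<partial>M) = (\<Sum>n. ennreal (u n) * (\<integral>\<^sup>+ \<omega>. ennreal (dev (n+K) \<omega> powr p) \<partial>M))"
    unfolding R_def u_def
    by (subst nn_integral_suminf) (simp_all add: ennreal_mult' nn_integral_cmult)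
  hence R_finite: "(\<integral>\<^sup>+ \<omega>. R \<omega> \<partial>M) < \<infinity>"
    using weighted_dev_moment_summable[OF p e] unfolding u_def by simp
  have pathwise: "summable (\<lambda>n. dev (n+K) \<omega>)
      \<and> (\<Sum>n. dev (n+K) \<omega>) powr p \<le> W powr (p-1) * enn2real (R \<omega>)" if "R \<omega> \<noteq> \<infinity>" for \<omega>
  proof -
    have v0: "u n * dev (n+K) \<omega> powr p \<ge> 0" for n unfolding u_def by simp
    have sv: "summable (\<lambda>n. u n * dev (n+K) \<omega> powr p)"
      using that unfolding R_def by (intro summable_suminf_not_top v0) auto
    have "R \<omega> = ennreal (\<Sum>n. u n * dev (n+K) \<omega> powr p)"
      unfolding R_def by (rule suminf_ennreal2[OF v0 sv])
    thus ?thesis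
      using summable_powr_suminf_le_weighted[OF p(1) _ w sw, of "\<lambda>n. dev (n+K) \<omega>"] sv v0
      unfolding wu W_def by (simp add: dev_def suminf_nonneg)
  qed
  have R_AE: "AE \<omega> in M. R \<omega> \<noteq> \<infinity>"
    using R_finite by (intro nn_integral_PInf_AE) simp_all
  thus "AE \<omega> in M. summable (\<lambda>n. dev (n+K) \<omega>)"
    by eventually_elim (use pathwise in blast)
  show "integrable M (\<lambda>\<omega>. (\<Sum>n. dev (n+K) \<omega>) powr p)"
  proof (rule integrableI_bounded)
    have "AE \<omega> in M. ennreal (norm ((\<Sum>n. dev (n+K) \<omega>) powr p)) \<le> ennreal (W powr (p-1)) * R \<omega>"
      using R_AE
    proof eventually_elim
      case (elim \<omega>)
      hence "ennreal (norm ((\<Sum>n. dev (n+K) \<omega>) powr p)) \<le> ennreal (W powr (p-1) * enn2real (R \<omega>))"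
        using pathwise[of \<omega>] by (simp add: ennreal_leI)
      also have "\<dots> = ennreal (W powr (p-1)) * R \<omega>"
        using elim by (simp add: ennreal_mult' less_top)
      finally show ?case .
    qed
    hence "(\<integral>\<^sup>+ \<omega>. ennreal (norm ((\<Sum>n. dev (n+K) \<omega>) powr p)) \<partial>M)
        \<le> (\<integral>\<^sup>+ \<omega>. ennreal (W powr (p-1)) * R \<omega> \<partial>M)"
      by (rule nn_integral_mono_AE)
    also have "\<dots> < \<infinity>"
      using R_finite by (simp add: nn_integral_cmult ennreal_mult_less_top)
    finally show "(\<integral>\<^sup>+ \<omega>. ennreal (norm ((\<Sum>n. dev (n+K) \<omega>) powr p)) \<partial>M) < \<infinity>" .
  qed measurable
qed

lemma AE_summable_dev: "AE \<omega> in M. summable (\<lambda>k. dev k \<omega>)"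
proof -
  have "AE \<omega> in M. summable (\<lambda>n. dev (n+2) \<omega>)"
    by (rule AE_summable_dev_shift[of 1]) simp_all
  moreover have "summable (\<lambda>n. dev (n+2) \<omega>) \<Longrightarrow> summable (\<lambda>k. dev k \<omega>)" for \<omega>
    using summable_iff_shift[of "\<lambda>k. dev k \<omega>" 2] by simp
  ultimately show ?thesis by (rule eventually_mono)
qed

lemma integrable_abs_suminf_Psi_ratio_diff_powr:
  fixes p :: real
  assumes p: "1 \<le> p" "p < real K"
  shows "integrable M (\<lambda>\<omega>. \<bar>\<Sum>n. Psi (Z (n+K) \<omega> / \<gamma>) / Z (n+K) \<omega> - Psi (real (n+K) / \<gamma>) / real (n+K)\<bar> powr p)"
proof (rule Bochner_Integration.integrable_bound[OF integrable_suminf_dev_powr[OF p]])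
  show "(\<lambda>\<omega>. \<bar>\<Sum>n. Psi (Z (n+K) \<omega> / \<gamma>) / Z (n+K) \<omega> - Psi (real (n+K) / \<gamma>) / real (n+K)\<bar> powr p)
      \<in> borel_measurable M"
    by measurable
  show "AE \<omega> in M. norm (\<bar>\<Sum>n. Psi (Z (n+K) \<omega> / \<gamma>) / Z (n+K) \<omega> - Psi (real (n+K) / \<gamma>) / real (n+K)\<bar> powr p)
      \<le> norm ((\<Sum>n. dev (n+K) \<omega>) powr p)"
    using AE_summable_dev_shift[OF p]
  proof eventually_elim
    case (elim \<omega>)
    hence "\<bar>\<Sum>n. Psi (Z (n+K) \<omega> / \<gamma>) / Z (n+K) \<omega> - Psi (real (n+K) / \<gamma>) / real (n+K)\<bar>
        \<le> (\<Sum>n. dev (n+K) \<omega>)"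
      unfolding dev_def by (rule summable_rabs)
    thus ?case using p by (simp add: powr_mono2)
  qed
qed

end

theorem lemma2:
  fixes M :: "'a measure" and E :: "nat \<Rightarrow> 'a \<Rightarrow> real"
    and r :: nat and \<gamma> :: real
  assumes "prob_space M"
    and "prob_space.indep_vars M (\<lambda>_. borel) E {1..}"
    and "\<And>i. i \<ge> 1 \<Longrightarrow> distributed M lborel (E i) (exponential_density 1)"
    and "\<gamma> > 0"
  defines "Z \<equiv> (\<lambda>k \<omega>. \<Sum>i\<in>{1..k}. E i \<omega>)"
  defines "Y \<equiv> (\<lambda>\<omega>. \<Sum>j. Psi (Z (j + r + 1) \<omega> / \<gamma>) / Z (j + r + 1) \<omega>
                         - Psi (real (j + r + 1) / \<gamma>) / real (j + r + 1))"
  shows "(AE \<omega> in M. summable (\<lambda>j. \<bar>Psi (Z (j + r + 1) \<omega> / \<gamma>) / Z (j + r + 1) \<omega>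
                         - Psi (real (j + r + 1) / \<gamma>) / real (j + r + 1)\<bar>))
       \<and> (\<forall>p::real. 1 \<le> p \<and> p < real r + 1 \<longrightarrow> integrable M (\<lambda>\<omega>. \<bar>Y \<omega>\<bar> powr p))"
proof -
  interpret A: exponential_arrivals M E \<gamma>
    by (intro exponential_arrivals.intro exponential_arrivals_axioms.intro assms)
  have Z_eq: "Z = A.Z" unfolding Z_def by (intro ext) (simp add: A.Z_def)
  have "summable (\<lambda>k. A.dev k \<omega>) \<Longrightarrow> summable (\<lambda>j. A.dev (j + (r+1)) \<omega>)" for \<omega>
    using summable_iff_shift[of "\<lambda>k. A.dev k \<omega>" "r+1"] by simp
  with A.AE_summable_dev
  have "AE \<omega> in M. summable (\<lambda>j. A.dev (j + (r+1)) \<omega>)" by (rule eventually_mono)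
  moreover have "integrable M (\<lambda>\<omega>. \<bar>Y \<omega>\<bar> powr p)" if "1 \<le> p" "p < real r + 1" for p
    using A.integrable_abs_suminf_Psi_ratio_diff_powr[of p "r+1"] that
    unfolding Y_def Z_eq by (simp add: add.assoc)
  ultimately show ?thesis
    unfolding A.dev_def Z_eq by (simp add: add.assoc)
qed

end
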